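(* Let $\mathcal{F}=\{i_{\alpha\beta}:\alpha\le\beta<\lambda\}$ be a complete iteration system and let $A\subseteq T(\mathcal{F})$ be an antichain such that for some $\alpha<\lambda$ the set $\{f(\alpha):f\in A\}$ is an antichain in $\mathbb{B}_\alpha$ (with $f\mapsto f(\alpha)$ injective on $A$). Then the pointwise supremum $\tilde\bigvee A$ is the supremum of $A$ in ${\sf RO}(T(\mathcal{F}))$.
   Context: A complete iteration system of length $\lambda$ (a limit ordinal) is a family $\mathcal{F}=\{i_{\alpha\beta}:\mathbb{B}_\alpha\to\mathbb{B}_\beta:\alpha\le\beta<\lambda\}$ where each $\mathbb{B}_\alpha$ is a complete Boolean algebra, $i_{\alpha\alpha}$ is the identity, each $i_{\alpha\beta}$ is a regular embedding (injective complete homomorphism) with retraction $\pi_{\alpha\beta}(c)=\bigwedge\{b: i_{\alpha\beta}(b)\ge c\}$, and $i_{\beta\gamma}\circ i_{\alpha\beta}=i_{\alpha\gamma}$. $T(\mathcal{F})$ is the set of threads $f\in\prod_{\alpha<\lambda}\mathbb{B}_\alpha$ with $\pi_{\alpha\beta}(f(\beta))=f(\alpha)$ for all $\alpha\le\beta<\lambda$, ordered pointwise (as a forcing poset the zero thread is removed). For $A\subseteq T(\mathcal{F})$ the pointwise supremum $\tilde\bigvee A$ is the thread $\alpha\mapsto\bigvee\{f(\alpha):f\in A\}$. ${\sf RO}(P)$ denotes the Boolean completion of a poset $P$, into which $P$ embeds densely. *)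

theory Defs
  imports Main
begin

definition is_lub :: "('a \<Rightarrow> 'a \<Rightarrow> bool) \<Rightarrow> 'a set \<Rightarrow> 'a set \<Rightarrow> 'a \<Rightarrow> bool" where
  "is_lub le S X x \<longleftrightarrow> x \<in> S \<and> (\<forall>y\<in>X. le y x) \<and> (\<forall>z\<in>S. (\<forall>y\<in>X. le y z) \<longrightarrow> le x z)"

definition is_glb :: "('a \<Rightarrow> 'a \<Rightarrow> bool) \<Rightarrow> 'a set \<Rightarrow> 'a set \<Rightarrow> 'a \<Rightarrow> bool" where
  "is_glb le S X x \<longleftrightarrow> x \<in> S \<and> (\<forall>y\<in>X. le x y) \<and> (\<forall>z\<in>S. (\<forall>y\<in>X. le z y) \<longrightarrow> le z x)"

definition lub_in :: "('a \<Rightarrow> 'a \<Rightarrow> bool) \<Rightarrow> 'a set \<Rightarrow> 'a set \<Rightarrow> 'a" where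
  "lub_in le S X = (THE x. is_lub le S X x)"

definition glb_in :: "('a \<Rightarrow> 'a \<Rightarrow> bool) \<Rightarrow> 'a set \<Rightarrow> 'a set \<Rightarrow> 'a" where
  "glb_in le S X = (THE x. is_glb le S X x)"

definition partial_order_on' :: "'a set \<Rightarrow> ('a \<Rightarrow> 'a \<Rightarrow> bool) \<Rightarrow> bool" where
  "partial_order_on' S le \<longleftrightarrow>
     (\<forall>x\<in>S. le x x) \<and>
     (\<forall>x\<in>S. \<forall>y\<in>S. le x y \<and> le y x \<longrightarrow> x = y) \<and>
     (\<forall>x\<in>S. \<forall>y\<in>S. \<forall>z\<in>S. le x y \<and> le y z \<longrightarrow> le x z)"

definition cba :: "'a set \<Rightarrow> ('a \<Rightarrow> 'a \<Rightarrow> bool) \<Rightarrow> bool" where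
  "cba S le \<longleftrightarrow> partial_order_on' S le \<and>
     (\<forall>X\<subseteq>S. \<exists>x. is_lub le S X x) \<and>
     (\<forall>x\<in>S. \<forall>y\<in>S. \<forall>z\<in>S.
        glb_in le S {x, lub_in le S {y, z}} = lub_in le S {glb_in le S {x, y}, glb_in le S {x, z}}) \<and>
     (\<forall>x\<in>S. \<exists>y\<in>S. lub_in le S {x, y} = lub_in le S S \<and> glb_in le S {x, y} = lub_in le S {})"

definition regular_embedding ::
  "'a set \<Rightarrow> ('a \<Rightarrow> 'a \<Rightarrow> bool) \<Rightarrow> 'a set \<Rightarrow> ('a \<Rightarrow> 'a \<Rightarrow> bool) \<Rightarrow> ('a \<Rightarrow> 'a) \<Rightarrow> bool" where
  "regular_embedding S le S' le' i \<longleftrightarrow>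
     i ` S \<subseteq> S' \<and> inj_on i S \<and>
     (\<forall>X\<subseteq>S. i (lub_in le S X) = lub_in le' S' (i ` X)) \<and>
     (\<forall>x\<in>S. \<forall>y\<in>S. i (glb_in le S {x, y}) = glb_in le' S' {i x, i y}) \<and>
     i (lub_in le S S) = lub_in le' S' S'"

text \<open>The length lambda (a limit ordinal) is represented by a well-ordered index type 'i without
  greatest element. B alpha is the carrier of the algebra B_alpha, le alpha its order, and
  e alpha beta the embedding i_{alpha beta}.\<close>
definition complete_iteration_system ::
  "('i::wellorder \<Rightarrow> 'b set) \<Rightarrow> ('i \<Rightarrow> 'b \<Rightarrow> 'b \<Rightarrow> bool) \<Rightarrow> ('i \<Rightarrow> 'i \<Rightarrow> 'b \<Rightarrow> 'b) \<Rightarrow> bool" where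
  "complete_iteration_system B le e \<longleftrightarrow>
     (\<forall>a::'i. \<exists>b. a < b) \<and>
     (\<forall>a. cba (B a) (le a)) \<and>
     (\<forall>a. \<forall>x\<in>B a. e a a x = x) \<and>
     (\<forall>a b. a \<le> b \<longrightarrow> regular_embedding (B a) (le a) (B b) (le b) (e a b)) \<and>
     (\<forall>a b c. a \<le> b \<and> b \<le> c \<longrightarrow> (\<forall>x\<in>B a. e b c (e a b x) = e a c x))"

definition retraction ::
  "('i \<Rightarrow> 'b set) \<Rightarrow> ('i \<Rightarrow> 'b \<Rightarrow> 'b \<Rightarrow> bool) \<Rightarrow> ('i \<Rightarrow> 'i \<Rightarrow> 'b \<Rightarrow> 'b) \<Rightarrow> 'i \<Rightarrow> 'i \<Rightarrow> 'b \<Rightarrow> 'b" where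
  "retraction B le e a b c = glb_in (le a) (B a) {x \<in> B a. le b c (e a b x)}"

definition threads ::
  "('i::wellorder \<Rightarrow> 'b set) \<Rightarrow> ('i \<Rightarrow> 'b \<Rightarrow> 'b \<Rightarrow> bool) \<Rightarrow> ('i \<Rightarrow> 'i \<Rightarrow> 'b \<Rightarrow> 'b) \<Rightarrow> ('i \<Rightarrow> 'b) set" where
  "threads B le e = {f. (\<forall>a. f a \<in> B a) \<and> (\<forall>a b. a \<le> b \<longrightarrow> retraction B le e a b (f b) = f a)}"

definition bot_of :: "('i \<Rightarrow> 'b set) \<Rightarrow> ('i \<Rightarrow> 'b \<Rightarrow> 'b \<Rightarrow> bool) \<Rightarrow> 'i \<Rightarrow> 'b" where
  "bot_of B le a = lub_in (le a) (B a) {}"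

definition zero_thread :: "('i \<Rightarrow> 'b set) \<Rightarrow> ('i \<Rightarrow> 'b \<Rightarrow> 'b \<Rightarrow> bool) \<Rightarrow> 'i \<Rightarrow> 'b" where
  "zero_thread B le = (\<lambda>a. bot_of B le a)"

definition thread_le :: "('i \<Rightarrow> 'b \<Rightarrow> 'b \<Rightarrow> bool) \<Rightarrow> ('i \<Rightarrow> 'b) \<Rightarrow> ('i \<Rightarrow> 'b) \<Rightarrow> bool" where
  "thread_le le f g \<longleftrightarrow> (\<forall>a. le a (f a) (g a))"

definition thread_poset ::
  "('i::wellorder \<Rightarrow> 'b set) \<Rightarrow> ('i \<Rightarrow> 'b \<Rightarrow> 'b \<Rightarrow> bool) \<Rightarrow> ('i \<Rightarrow> 'i \<Rightarrow> 'b \<Rightarrow> 'b) \<Rightarrow> ('i \<Rightarrow> 'b) set" where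
  "thread_poset B le e = threads B le e - {zero_thread B le}"

definition pointwise_sup ::
  "('i \<Rightarrow> 'b set) \<Rightarrow> ('i \<Rightarrow> 'b \<Rightarrow> 'b \<Rightarrow> bool) \<Rightarrow> ('i \<Rightarrow> 'b) set \<Rightarrow> 'i \<Rightarrow> 'b" where
  "pointwise_sup B le A = (\<lambda>a. lub_in (le a) (B a) ((\<lambda>f. f a) ` A))"

definition ba_incompatible :: "('i \<Rightarrow> 'b set) \<Rightarrow> ('i \<Rightarrow> 'b \<Rightarrow> 'b \<Rightarrow> bool) \<Rightarrow> 'i \<Rightarrow> 'b \<Rightarrow> 'b \<Rightarrow> bool" where
  "ba_incompatible B le a x y \<longleftrightarrow> (\<forall>z\<in>B a. le a z x \<and> le a z y \<longrightarrow> z = bot_of B le a)"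

definition compatible :: "'p set \<Rightarrow> ('p \<Rightarrow> 'p \<Rightarrow> bool) \<Rightarrow> 'p \<Rightarrow> 'p \<Rightarrow> bool" where
  "compatible P r p q \<longleftrightarrow> (\<exists>s\<in>P. r s p \<and> r s q)"

definition antichain :: "'p set \<Rightarrow> ('p \<Rightarrow> 'p \<Rightarrow> bool) \<Rightarrow> 'p set \<Rightarrow> bool" where
  "antichain P r A \<longleftrightarrow> A \<subseteq> P \<and> (\<forall>p\<in>A. \<forall>q\<in>A. p \<noteq> q \<longrightarrow> \<not> compatible P r p q)"

text \<open>Regular open sets in the downward-closed-set topology on P; these form RO(P), ordered by inclusion.\<close>
definition regular_open :: "'p set \<Rightarrow> ('p \<Rightarrow> 'p \<Rightarrow> bool) \<Rightarrow> 'p set \<Rightarrow> bool" where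
  "regular_open P r U \<longleftrightarrow> U \<subseteq> P \<and>
     (\<forall>p\<in>U. \<forall>q\<in>P. r q p \<longrightarrow> q \<in> U) \<and>
     (\<forall>p\<in>P. (\<forall>q\<in>P. r q p \<longrightarrow> (\<exists>s\<in>U. r s q)) \<longrightarrow> p \<in> U)"

definition RO :: "'p set \<Rightarrow> ('p \<Rightarrow> 'p \<Rightarrow> bool) \<Rightarrow> 'p set set" where
  "RO P r = {U. regular_open P r U}"

text \<open>The dense embedding of P into RO(P): p maps to int(cl(down-set of p)).\<close>
definition ro_emb :: "'p set \<Rightarrow> ('p \<Rightarrow> 'p \<Rightarrow> bool) \<Rightarrow> 'p \<Rightarrow> 'p set" where
  "ro_emb P r p = {q\<in>P. \<forall>q'\<in>P. r q' q \<longrightarrow> compatible P r q' p}"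

end

theory Submission
  imports Defs
begin

text \<open>Every member of A lies below the pointwise supremum g, so it remains to show that A is
  predense below g. A nonzero thread s below g is nonzero at level \<alpha>, hence s \<alpha> meets
  f \<alpha> for some f in A. The thread generated by s and f \<alpha> (the meet of s with the image
  of f \<alpha> above \<alpha>, its retraction below) is nonzero and below s, and it is below f: above
  \<alpha> the images of the values g \<alpha>, g in A, are pairwise disjoint and dominate the
  corresponding g, so the part of s inside the image of f \<alpha> lies under f.\<close>

locale cba_set =
  fixes S :: "'a set" and le :: "'a \<Rightarrow> 'a \<Rightarrow> bool"
  assumes cba: "cba S le"
begin

abbreviation "meet x y \<equiv> glb_in le S {x, y}"
abbreviation "join x y \<equiv> lub_in le S {x, y}"
abbreviation "ba_bot \<equiv> lub_in le S {}"
abbreviation "ba_top \<equiv> lub_in le S S"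

definition complements :: "'a \<Rightarrow> 'a \<Rightarrow> bool" where
  "complements u u' \<longleftrightarrow> u \<in> S \<and> u' \<in> S \<and> join u u' = ba_top \<and> meet u u' = ba_bot"

lemma partial_order: "partial_order_on' S le"
  using cba unfolding cba_def by (rule conjunct1)

lemma refl: "x \<in> S \<Longrightarrow> le x x"
  using partial_order unfolding partial_order_on'_def by blast

lemma antisym: "x \<in> S \<Longrightarrow> y \<in> S \<Longrightarrow> le x y \<Longrightarrow> le y x \<Longrightarrow> x = y"
  using partial_order unfolding partial_order_on'_def by blast

lemma trans: "x \<in> S \<Longrightarrow> y \<in> S \<Longrightarrow> z \<in> S \<Longrightarrow> le x y \<Longrightarrow> le y z \<Longrightarrow> le x z"
  using partial_order unfolding partial_order_on'_def by blast

lemma ex_is_lub: "X \<subseteq> S \<Longrightarrow> \<exists>x. is_lub le S X x"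
  using cba unfolding cba_def by (elim conjE) blast

lemma distrib: "x \<in> S \<Longrightarrow> y \<in> S \<Longrightarrow> z \<in> S \<Longrightarrow> meet x (join y z) = join (meet x y) (meet x z)"
  using cba unfolding cba_def by (elim conjE) blast

lemma ex_complements:
  assumes "x \<in> S"
  shows "\<exists>y. complements x y"
proof -
  have "\<forall>x\<in>S. \<exists>y\<in>S. join x y = ba_top \<and> meet x y = ba_bot"
    using cba unfolding cba_def by (elim conjE) assumption
  then show ?thesis using assms unfolding complements_def by blast
qed

lemma complements_commute: "complements u u' \<Longrightarrow> complements u' u"
  unfolding complements_def by (simp add: insert_commute)

lemma is_lub_unique: "is_lub le S X x \<Longrightarrow> is_lub le S X y \<Longrightarrow> x = y"
  unfolding is_lub_def using antisym by blast

lemma is_glb_unique: "is_glb le S X x \<Longrightarrow> is_glb le S X y \<Longrightarrow> x = y"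
  unfolding is_glb_def using antisym by blast

lemma lub_in_eq: "is_lub le S X x \<Longrightarrow> lub_in le S X = x"
  unfolding lub_in_def using is_lub_unique by blast

lemma glb_in_eq: "is_glb le S X x \<Longrightarrow> glb_in le S X = x"
  unfolding glb_in_def using is_glb_unique by blast

lemma lub_in_is_lub: "X \<subseteq> S \<Longrightarrow> is_lub le S X (lub_in le S X)"
  using ex_is_lub lub_in_eq by metis

lemma glb_in_is_glb: "X \<subseteq> S \<Longrightarrow> is_glb le S X (glb_in le S X)"
proof -
  assume X: "X \<subseteq> S"
  let ?L = "{z\<in>S. \<forall>y\<in>X. le z y}"
  have "is_lub le S ?L (lub_in le S ?L)" by (rule lub_in_is_lub) auto
  then have "is_glb le S X (lub_in le S ?L)"
    using X unfolding is_lub_def is_glb_def by blast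
  then show ?thesis using glb_in_eq by simp
qed

lemma lub_in_closed: "X \<subseteq> S \<Longrightarrow> lub_in le S X \<in> S"
  and lub_in_upper: "X \<subseteq> S \<Longrightarrow> y \<in> X \<Longrightarrow> le y (lub_in le S X)"
  and lub_in_least: "X \<subseteq> S \<Longrightarrow> z \<in> S \<Longrightarrow> (\<And>y. y \<in> X \<Longrightarrow> le y z) \<Longrightarrow> le (lub_in le S X) z"
  using lub_in_is_lub[of X] unfolding is_lub_def by blast+

lemma glb_in_closed: "X \<subseteq> S \<Longrightarrow> glb_in le S X \<in> S"
  and glb_in_lower: "X \<subseteq> S \<Longrightarrow> y \<in> X \<Longrightarrow> le (glb_in le S X) y"
  and glb_in_greatest: "X \<subseteq> S \<Longrightarrow> z \<in> S \<Longrightarrow> (\<And>y. y \<in> X \<Longrightarrow> le z y) \<Longrightarrow> le z (glb_in le S X)"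
  using glb_in_is_glb[of X] unfolding is_glb_def by blast+

lemma meet_closed: "x \<in> S \<Longrightarrow> y \<in> S \<Longrightarrow> meet x y \<in> S"
  and meet_le1: "x \<in> S \<Longrightarrow> y \<in> S \<Longrightarrow> le (meet x y) x"
  and meet_le2: "x \<in> S \<Longrightarrow> y \<in> S \<Longrightarrow> le (meet x y) y"
  and meet_greatest: "x \<in> S \<Longrightarrow> y \<in> S \<Longrightarrow> z \<in> S \<Longrightarrow> le z x \<Longrightarrow> le z y \<Longrightarrow> le z (meet x y)"
  by (auto intro: glb_in_closed glb_in_lower glb_in_greatest)

lemma join_closed: "x \<in> S \<Longrightarrow> y \<in> S \<Longrightarrow> join x y \<in> S"
  and join_ge1: "x \<in> S \<Longrightarrow> y \<in> S \<Longrightarrow> le x (join x y)"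
  and join_ge2: "x \<in> S \<Longrightarrow> y \<in> S \<Longrightarrow> le y (join x y)"
  and join_least: "x \<in> S \<Longrightarrow> y \<in> S \<Longrightarrow> z \<in> S \<Longrightarrow> le x z \<Longrightarrow> le y z \<Longrightarrow> le (join x y) z"
  by (auto intro: lub_in_closed lub_in_upper lub_in_least)

lemma meet_commute: "meet x y = meet y x"
  by (simp add: insert_commute)

lemma bot_closed: "ba_bot \<in> S"
  and bot_least: "x \<in> S \<Longrightarrow> le ba_bot x"
  and top_closed: "ba_top \<in> S"
  and top_greatest: "x \<in> S \<Longrightarrow> le x ba_top"
  by (auto intro: lub_in_closed lub_in_least lub_in_upper)

lemma le_bot_imp_eq: "x \<in> S \<Longrightarrow> le x ba_bot \<Longrightarrow> x = ba_bot"
  using antisym bot_closed bot_least by blast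

lemma meet_absorb: "x \<in> S \<Longrightarrow> y \<in> S \<Longrightarrow> le x y \<Longrightarrow> meet x y = x"
  by (rule antisym) (auto intro: meet_closed meet_le1 meet_greatest refl)

lemma meet_mono: "x \<in> S \<Longrightarrow> y \<in> S \<Longrightarrow> z \<in> S \<Longrightarrow> le x y \<Longrightarrow> le (meet x z) (meet y z)"
proof -
  assume h: "x \<in> S" "y \<in> S" "z \<in> S" "le x y"
  have "le (meet x z) y" using trans[OF meet_closed[OF h(1,3)] h(1,2) meet_le1[OF h(1,3)] h(4)] .
  then show ?thesis using meet_greatest[OF h(2,3) meet_closed[OF h(1,3)]] meet_le2[OF h(1,3)] by blast
qed

lemma meet_le_bot_imp_eq: "x \<in> S \<Longrightarrow> y \<in> S \<Longrightarrow> le (meet x y) ba_bot \<Longrightarrow> meet x y = ba_bot"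
  using le_bot_imp_eq meet_closed by blast

lemma meet_eq_bot_mono:
  "x \<in> S \<Longrightarrow> y \<in> S \<Longrightarrow> z \<in> S \<Longrightarrow> le x y \<Longrightarrow> meet y z = ba_bot \<Longrightarrow> meet x z = ba_bot"
  by (metis meet_le_bot_imp_eq meet_mono)

lemma join_split_by_complements:
  assumes "complements u u'" "x \<in> S"
  shows "x = join (meet x u) (meet x u')"
  using assms distrib[of x u u'] meet_absorb[of x ba_top] top_closed top_greatest
  unfolding complements_def by simp

lemma le_iff_meet_complement_eq_bot:
  assumes u: "complements u u'" and c: "c \<in> S"
  shows "le c u \<longleftrightarrow> meet c u' = ba_bot"
proof
  assume "le c u"
  then show "meet c u' = ba_bot"
    using u c meet_eq_bot_mono[of c u u'] unfolding complements_def by blast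
next
  assume h: "meet c u' = ba_bot"
  have "c = join (meet c u) ba_bot" using join_split_by_complements[OF u c] h by simp
  also have "le \<dots> u"
    using u c unfolding complements_def by (blast intro: join_least meet_closed meet_le2 bot_least bot_closed)
  finally show "le c u" .
qed

text \<open>Via complements this reduces to the least upper bound property.\<close>
lemma meet_lub_in_eq_bot:
  assumes c: "c \<in> S" and W: "W \<subseteq> S" and disj: "\<And>w. w \<in> W \<Longrightarrow> meet c w = ba_bot"
  shows "meet c (lub_in le S W) = ba_bot"
proof -
  obtain c' where c': "complements c c'" using ex_complements c by blast
  have c'S: "c' \<in> S" using c' unfolding complements_def by blast
  have "le w c'" if "w \<in> W" for w
    using le_iff_meet_complement_eq_bot[OF complements_commute[OF c'], of w] disj that W meet_commute by auto
  then have "le (lub_in le S W) c'" using lub_in_least W c'S by blast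
  then show ?thesis
    using le_iff_meet_complement_eq_bot[OF complements_commute[OF c'] lub_in_closed[OF W]] meet_commute by simp
qed

lemma ex_meet_neq_bot_if_le_lub_in:
  assumes c: "c \<in> S" "c \<noteq> ba_bot" and W: "W \<subseteq> S" and le_lub: "le c (lub_in le S W)"
  obtains w where "w \<in> W" "meet c w \<noteq> ba_bot"
  using meet_lub_in_eq_bot[OF c(1) W] meet_absorb[OF c(1) lub_in_closed[OF W] le_lub] c(2) by auto

lemma meet_le_if_disjoint_from_others:
  assumes x: "x \<in> S" "le x (lub_in le S W)" and W: "W \<subseteq> S" and u: "u \<in> S" and v: "v \<in> S"
    and disj: "\<And>w. w \<in> W \<Longrightarrow> w \<noteq> v \<Longrightarrow> meet u w = ba_bot"
  shows "le (meet x u) v"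
proof -
  obtain v' where v': "complements v v'" using ex_complements v by blast
  have v'S: "v' \<in> S" using v' unfolding complements_def by blast
  let ?y = "meet u v'"
  have yS: "?y \<in> S" using u v'S by (rule meet_closed)
  have "meet ?y w = ba_bot" if "w \<in> W" for w
  proof (cases "w = v")
    case True
    have "meet v' v = ba_bot" using v' unfolding complements_def by (simp add: meet_commute)
    then show ?thesis using True meet_eq_bot_mono[OF yS v'S v] meet_le2[OF u v'S] by blast
  next
    case False
    then show ?thesis using meet_eq_bot_mono[OF yS u] meet_le1[OF u v'S] disj that W by blast
  qed
  then have "meet ?y (lub_in le S W) = ba_bot" using meet_lub_in_eq_bot[OF yS W] by blast
  moreover have "le (meet (meet x u) v') (meet ?y (lub_in le S W))"
  proof -
    have xu: "meet x u \<in> S" using meet_closed x(1) u .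
    have m: "meet (meet x u) v' \<in> S" using meet_closed xu v'S .
    have "le (meet (meet x u) v') u" using trans[OF m xu u meet_le1[OF xu v'S] meet_le2[OF x(1) u]] .
    then have 1: "le (meet (meet x u) v') ?y" using meet_greatest[OF u v'S m] meet_le2[OF xu v'S] by blast
    have "le (meet (meet x u) v') x" using trans[OF m xu x(1) meet_le1[OF xu v'S] meet_le1[OF x(1) u]] .
    then have 2: "le (meet (meet x u) v') (lub_in le S W)"
      using trans[OF m x(1) lub_in_closed[OF W]] x(2) by blast
    show ?thesis using meet_greatest[OF yS lub_in_closed[OF W] m 1 2] .
  qed
  ultimately have "meet (meet x u) v' = ba_bot"
    using x u v'S by (metis meet_closed meet_le_bot_imp_eq)
  then show ?thesis
    using le_iff_meet_complement_eq_bot[OF v' meet_closed[OF x(1) u]] by blast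
qed

lemma complements_antimono:
  assumes x: "complements x x'" and m: "complements m m'" and le_x'_m: "le x' m"
  shows "le m' x"
proof -
  have S: "x \<in> S" "x' \<in> S" "m \<in> S" "m' \<in> S" using x m unfolding complements_def by blast+
  have "meet m m' = ba_bot" using m unfolding complements_def by blast
  then have "meet x' m' = ba_bot" using meet_eq_bot_mono[OF S(2,3,4) le_x'_m] by blast
  then show ?thesis using le_iff_meet_complement_eq_bot[OF x S(4)] meet_commute by metis
qed

lemma le_join_if_split_by_complements:
  assumes u: "complements u u'" and S: "x \<in> S" "a \<in> S" "b \<in> S"
    and le: "le (meet x u) a" "le (meet x u') b"
  shows "le x (join a b)"
proof -
  have uS: "u \<in> S" "u' \<in> S" using u unfolding complements_def by blast+
  have ab: "join a b \<in> S" using join_closed S(2,3) .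
  have "le (meet x u) (join a b)" using trans[OF meet_closed[OF S(1) uS(1)] S(2) ab le(1) join_ge1[OF S(2,3)]] .
  moreover have "le (meet x u') (join a b)" using trans[OF meet_closed[OF S(1) uS(2)] S(3) ab le(2) join_ge2[OF S(2,3)]] .
  ultimately have "le (join (meet x u) (meet x u')) (join a b)"
    using join_least meet_closed S(1) uS ab by blast
  then show ?thesis using join_split_by_complements[OF u S(1)] by simp
qed

lemma meet_le_if_le_join_complement:
  assumes d: "complements d d'" and S: "y \<in> S" "q \<in> S" and le_join: "le y (join q d')"
  shows "le (meet y d) q"
proof -
  have dS: "d \<in> S" "d' \<in> S" and dd': "meet d d' = ba_bot" using d unfolding complements_def by blast+
  have "meet (join q d') d = join (meet d q) ba_bot"
    using distrib[OF dS(1) S(2) dS(2)] dd' meet_commute by metis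
  moreover have "le (join (meet d q) ba_bot) q"
    using S dS by (blast intro: join_least meet_closed meet_le2 bot_least bot_closed refl)
  ultimately have "le (meet (join q d') d) q" by simp
  then show ?thesis
    using trans meet_mono[OF S(1) join_closed[OF S(2) dS(2)] dS(1) le_join]
      meet_closed S dS join_closed by metis
qed

end

definition retract :: "'a set \<Rightarrow> ('a \<Rightarrow> 'a \<Rightarrow> bool) \<Rightarrow> ('a \<Rightarrow> 'a \<Rightarrow> bool) \<Rightarrow> ('a \<Rightarrow> 'a) \<Rightarrow> 'a \<Rightarrow> 'a" where
  "retract S le le' i c = glb_in le S {x\<in>S. le' c (i x)}"

locale regular_emb = s: cba_set S le + t: cba_set S' le'
  for S :: "'a set" and le and S' :: "'a set" and le' +
  fixes i :: "'a \<Rightarrow> 'a"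
  assumes emb: "regular_embedding S le S' le' i"
begin

lemma emb_closed: "x \<in> S \<Longrightarrow> i x \<in> S'"
  using emb unfolding regular_embedding_def by blast

lemma emb_meet: "x \<in> S \<Longrightarrow> y \<in> S \<Longrightarrow> i (s.meet x y) = t.meet (i x) (i y)"
  using emb unfolding regular_embedding_def by blast

lemma emb_lub_in: "X \<subseteq> S \<Longrightarrow> i (lub_in le S X) = lub_in le' S' (i ` X)"
  using emb unfolding regular_embedding_def by blast

lemma emb_join: "x \<in> S \<Longrightarrow> y \<in> S \<Longrightarrow> i (s.join x y) = t.join (i x) (i y)"
  using emb_lub_in[of "{x, y}"] by simp

lemma emb_bot: "i s.ba_bot = t.ba_bot"
  using emb_lub_in[of "{}"] by simp

lemma emb_top: "i s.ba_top = t.ba_top"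
  using emb unfolding regular_embedding_def by blast

lemma emb_mono: "x \<in> S \<Longrightarrow> y \<in> S \<Longrightarrow> le x y \<Longrightarrow> le' (i x) (i y)"
  by (metis emb_meet s.meet_absorb t.meet_le2 emb_closed)

lemma emb_complements: "s.complements u u' \<Longrightarrow> t.complements (i u) (i u')"
  unfolding s.complements_def t.complements_def by (metis emb_join emb_meet emb_top emb_bot emb_closed)

abbreviation "\<pi> \<equiv> retract S le le' i"

lemma retract_closed: "\<pi> c \<in> S"
  unfolding retract_def by (rule s.glb_in_closed) blast

lemma retract_least: "x \<in> S \<Longrightarrow> le' c (i x) \<Longrightarrow> le (\<pi> c) x"
  unfolding retract_def by (rule s.glb_in_lower) blast+

text \<open>The retraction of c is the complement of the join of all x with i x disjoint from c.\<close>
lemma le_emb_retract: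
  assumes c: "c \<in> S'"
  shows "le' c (i (\<pi> c))"
proof -
  define Z where "Z = {z\<in>S. t.meet c (i z) = t.ba_bot}"
  define m where "m = lub_in le S Z"
  have ZS: "Z \<subseteq> S" unfolding Z_def by auto
  have mS: "m \<in> S" unfolding m_def using s.lub_in_closed ZS .
  have "t.meet c (lub_in le' S' (i ` Z)) = t.ba_bot"
    by (rule t.meet_lub_in_eq_bot[OF c]) (auto simp: Z_def intro: emb_closed)
  then have cm: "t.meet c (i m) = t.ba_bot" unfolding m_def using emb_lub_in ZS by simp
  obtain m' where m': "s.complements m' m" using s.ex_complements mS s.complements_commute by blast
  have m'S: "m' \<in> S" using m' unfolding s.complements_def by blast
  have c_le: "le' c (i m')"
    using t.le_iff_meet_complement_eq_bot[OF emb_complements[OF m'] c] cm by simp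
  have "le m' x" if x: "x \<in> S" "le' c (i x)" for x
  proof -
    obtain x' where x': "s.complements x x'" using s.ex_complements x(1) by blast
    then have "t.meet c (i x') = t.ba_bot"
      using t.le_iff_meet_complement_eq_bot[OF emb_complements[OF x'] c] x(2) by simp
    then have "x' \<in> Z" unfolding Z_def using x' s.complements_def by simp
    then have "le x' m" unfolding m_def using s.lub_in_upper ZS by blast
    then show ?thesis using s.complements_antimono[OF x' s.complements_commute[OF m']] by blast
  qed
  then have "is_glb le S {x\<in>S. le' c (i x)} m'"
    unfolding is_glb_def using m'S c_le by blast
  then have "\<pi> c = m'" unfolding retract_def by (rule s.glb_in_eq)
  then show ?thesis using c_le by simp
qed

lemma retract_unique:
  "c \<in> S' \<Longrightarrow> q \<in> S \<Longrightarrow> le' c (i q) \<Longrightarrow> (\<And>x. x \<in> S \<Longrightarrow> le' c (i x) \<Longrightarrow> le q x) \<Longrightarrow> \<pi> c = q"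
  by (meson retract_closed retract_least le_emb_retract s.antisym)

lemma retract_mono: "c \<in> S' \<Longrightarrow> d \<in> S' \<Longrightarrow> le' c d \<Longrightarrow> le (\<pi> c) (\<pi> d)"
  by (meson emb_closed retract_closed retract_least le_emb_retract t.trans)

lemma retract_emb_le: "x \<in> S \<Longrightarrow> le (\<pi> (i x)) x"
  by (simp add: emb_closed retract_least t.refl)

lemma retract_bot: "\<pi> t.ba_bot = s.ba_bot"
  by (meson emb_closed retract_closed retract_least s.bot_closed s.le_bot_imp_eq t.bot_closed t.bot_least)

lemma retract_meet_emb:
  assumes x: "x \<in> S'" and d: "d \<in> S"
  shows "\<pi> (t.meet x (i d)) = s.meet (\<pi> x) d"
proof (rule s.antisym)
  let ?q = "\<pi> (t.meet x (i d))"
  have xd: "t.meet x (i d) \<in> S'" using t.meet_closed x emb_closed d by blast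
  have qS: "?q \<in> S" by (rule retract_closed)
  have pxS: "\<pi> x \<in> S" by (rule retract_closed)
  show "?q \<in> S" "s.meet (\<pi> x) d \<in> S" using qS s.meet_closed pxS d by blast+
  have "le ?q (\<pi> (i d))" using retract_mono xd emb_closed d t.meet_le2 x by blast
  then have "le ?q d" using retract_emb_le d s.trans qS retract_closed emb_closed by blast
  moreover have "le ?q (\<pi> x)" using retract_mono xd x t.meet_le1 emb_closed d by blast
  ultimately show "le ?q (s.meet (\<pi> x) d)" using s.meet_greatest pxS d qS by blast
  obtain d' where d': "s.complements d d'" using s.ex_complements d by blast
  have d'S: "d' \<in> S" using d' unfolding s.complements_def by blast
  have "le' x (t.join (i ?q) (i d'))"
  proof (rule t.le_join_if_split_by_complements[OF emb_complements[OF d'] x emb_closed[OF qS] emb_closed[OF d'S]])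
    show "le' (t.meet x (i d)) (i ?q)" using le_emb_retract[OF xd] .
    show "le' (t.meet x (i d')) (i d')" using t.meet_le2 x emb_closed d'S by blast
  qed
  then have "le (\<pi> x) (s.join ?q d')" using retract_least s.join_closed qS d'S x emb_join by simp
  then show "le (s.meet (\<pi> x) d) ?q" using s.meet_le_if_le_join_complement[OF d' pxS qS] by blast
qed

end

lemma retract_comp:
  assumes E1: "regular_emb S1 le1 S2 le2 i" and E2: "regular_emb S2 le2 S3 le3 j"
    and E3: "regular_emb S1 le1 S3 le3 k"
    and comp: "\<And>x. x \<in> S1 \<Longrightarrow> j (i x) = k x" and y: "y \<in> S3"
  shows "retract S1 le1 le2 i (retract S2 le2 le3 j y) = retract S1 le1 le3 k y"
proof -
  interpret E1: regular_emb S1 le1 S2 le2 i by fact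
  interpret E2: regular_emb S2 le2 S3 le3 j by fact
  interpret E3: regular_emb S1 le1 S3 le3 k by fact
  let ?q = "E1.\<pi> (E2.\<pi> y)"
  have yS: "E2.\<pi> y \<in> S2" by (rule E2.retract_closed)
  have qS: "?q \<in> S1" by (rule E1.retract_closed)
  show ?thesis
  proof (rule sym, rule E3.retract_unique[OF y qS])
    have "le2 (E2.\<pi> y) (i ?q)" using E1.le_emb_retract yS .
    then have "le3 (j (E2.\<pi> y)) (j (i ?q))" using E2.emb_mono yS E1.emb_closed qS by blast
    then show "le3 y (k ?q)"
      using E2.le_emb_retract[OF y] comp qS E2.t.trans y E2.emb_closed yS E1.emb_closed by metis
  next
    fix x assume x: "x \<in> S1" "le3 y (k x)"
    then have "le2 (E2.\<pi> y) (i x)" using E2.retract_least E1.emb_closed comp by metis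
    then show "le1 ?q x" using E1.retract_least x by blast
  qed
qed

locale iteration_system =
  fixes B :: "'i::wellorder \<Rightarrow> 'b set" and le :: "'i \<Rightarrow> 'b \<Rightarrow> 'b \<Rightarrow> bool"
    and e :: "'i \<Rightarrow> 'i \<Rightarrow> 'b \<Rightarrow> 'b"
  assumes cis: "complete_iteration_system B le e"
begin

abbreviation "meet_at a x y \<equiv> glb_in (le a) (B a) {x, y}"
abbreviation "bot_at a \<equiv> lub_in (le a) (B a) {}"
abbreviation "\<pi> a b \<equiv> retract (B a) (le a) (le b) (e a b)"

lemma cba_at: "cba_set (B a) (le a)"
  using cis unfolding complete_iteration_system_def cba_set_def by blast

lemma regular_emb_at: "a \<le> b \<Longrightarrow> regular_emb (B a) (le a) (B b) (le b) (e a b)"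
  using cis cba_at unfolding complete_iteration_system_def regular_emb_def regular_emb_axioms_def by blast

lemma emb_self: "x \<in> B a \<Longrightarrow> e a a x = x"
  using cis unfolding complete_iteration_system_def by blast

lemma emb_comp: "a \<le> b \<Longrightarrow> b \<le> c \<Longrightarrow> x \<in> B a \<Longrightarrow> e b c (e a b x) = e a c x"
  using cis unfolding complete_iteration_system_def by blast

lemma retraction_eq_retract: "retraction B le e a b = \<pi> a b"
  unfolding retraction_def retract_def by (rule ext) simp

lemma retract_comp_at: "a \<le> b \<Longrightarrow> b \<le> c \<Longrightarrow> y \<in> B c \<Longrightarrow> \<pi> a b (\<pi> b c y) = \<pi> a c y"
  by (rule retract_comp[OF regular_emb_at regular_emb_at regular_emb_at]) (auto intro: emb_comp order_trans)

lemma thread_closed: "f \<in> threads B le e \<Longrightarrow> f a \<in> B a"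
  unfolding threads_def by blast

lemma thread_retract: "f \<in> threads B le e \<Longrightarrow> a \<le> b \<Longrightarrow> \<pi> a b (f b) = f a"
  unfolding threads_def retraction_eq_retract by blast

lemma threadsI: "(\<And>a. f a \<in> B a) \<Longrightarrow> (\<And>a b. a \<le> b \<Longrightarrow> \<pi> a b (f b) = f a) \<Longrightarrow> f \<in> threads B le e"
  unfolding threads_def retraction_eq_retract by blast

lemma thread_le_emb: "f \<in> threads B le e \<Longrightarrow> a \<le> b \<Longrightarrow> le b (f b) (e a b (f a))"
proof -
  assume f: "f \<in> threads B le e" and ab: "a \<le> b"
  interpret E: regular_emb "B a" "le a" "B b" "le b" "e a b" using regular_emb_at ab .
  show ?thesis using E.le_emb_retract[OF thread_closed[OF f]] thread_retract[OF f ab] by simp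
qed

lemma thread_le_refl: "f \<in> threads B le e \<Longrightarrow> thread_le le f f"
  by (simp add: thread_le_def cba_set.refl[OF cba_at] thread_closed)

lemma thread_le_trans:
  "f \<in> threads B le e \<Longrightarrow> g \<in> threads B le e \<Longrightarrow> (\<And>a. h a \<in> B a) \<Longrightarrow>
    thread_le le f g \<Longrightarrow> thread_le le g h \<Longrightarrow> thread_le le f h"
  unfolding thread_le_def by (metis cba_set.trans[OF cba_at] thread_closed)

lemma pointwise_sup_closed: "A \<subseteq> threads B le e \<Longrightarrow> pointwise_sup B le A a \<in> B a"
  unfolding pointwise_sup_def by (rule cba_set.lub_in_closed[OF cba_at]) (auto intro: thread_closed)

lemma le_pointwise_sup:
  assumes A: "A \<subseteq> threads B le e" and f: "f \<in> A" and s: "s \<in> threads B le e"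
    and s_le: "thread_le le s f"
  shows "thread_le le s (pointwise_sup B le A)"
proof (rule thread_le_trans[OF s _ pointwise_sup_closed[OF A] s_le])
  show "f \<in> threads B le e" using A f by blast
  show "thread_le le f (pointwise_sup B le A)"
    unfolding thread_le_def pointwise_sup_def using A f
    by (auto intro: cba_set.lub_in_upper[OF cba_at] thread_closed)
qed

text \<open>A thread vanishing at one level vanishes everywhere: below it by retraction, above it
  because each value lies under the embedded lower value.\<close>
lemma thread_neq_bot_at:
  assumes s: "s \<in> threads B le e" "s \<noteq> zero_thread B le"
  shows "s a \<noteq> bot_at a"
proof
  assume sa: "s a = bot_at a"
  obtain b where b: "s b \<noteq> bot_at b"
    using s(2) unfolding zero_thread_def bot_of_def by auto
  show False
  proof (cases "b \<le> a")
    case True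
    interpret E: regular_emb "B b" "le b" "B a" "le a" "e b a" using regular_emb_at True .
    show False using b sa E.retract_bot thread_retract[OF s(1) True] by simp
  next
    case False
    then have ab: "a \<le> b" by simp
    interpret E: regular_emb "B a" "le a" "B b" "le b" "e a b" using regular_emb_at ab .
    have "le b (s b) (bot_at b)" using thread_le_emb[OF s(1) ab] sa E.emb_bot by simp
    then show False using b E.t.le_bot_imp_eq thread_closed s(1) by blast
  qed
qed

definition thread_meet :: "('i \<Rightarrow> 'b) \<Rightarrow> 'i \<Rightarrow> 'b \<Rightarrow> 'i \<Rightarrow> 'b" where
  "thread_meet s \<alpha> x = (\<lambda>b. if \<alpha> \<le> b then meet_at b (s b) (e \<alpha> b x) else \<pi> b \<alpha> (meet_at \<alpha> (s \<alpha>) x))"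

lemma thread_meet_at: "x \<in> B \<alpha> \<Longrightarrow> thread_meet s \<alpha> x \<alpha> = meet_at \<alpha> (s \<alpha>) x"
  unfolding thread_meet_def using emb_self by simp

lemma thread_meet_closed:
  assumes s: "s \<in> threads B le e" and x: "x \<in> B \<alpha>"
  shows "thread_meet s \<alpha> x b \<in> B b"
proof (cases "\<alpha> \<le> b")
  case True
  interpret E: regular_emb "B \<alpha>" "le \<alpha>" "B b" "le b" "e \<alpha> b" using regular_emb_at True .
  show ?thesis using True E.t.meet_closed thread_closed[OF s] E.emb_closed x
    unfolding thread_meet_def by simp
next
  case False
  interpret E: regular_emb "B b" "le b" "B \<alpha>" "le \<alpha>" "e b \<alpha>" using regular_emb_at False by simp
  show ?thesis using False E.retract_closed unfolding thread_meet_def by simp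
qed

lemma thread_meet_in_threads:
  assumes s: "s \<in> threads B le e" and x: "x \<in> B \<alpha>"
  shows "thread_meet s \<alpha> x \<in> threads B le e"
proof (rule threadsI[OF thread_meet_closed[OF s x]])
  let ?t = "thread_meet s \<alpha> x"
  have above: "\<pi> b d (?t d) = ?t b" if bd: "\<alpha> \<le> b" "b \<le> d" for b d
  proof -
    interpret E: regular_emb "B b" "le b" "B d" "le d" "e b d" using regular_emb_at bd(2) .
    interpret E2: regular_emb "B \<alpha>" "le \<alpha>" "B b" "le b" "e \<alpha> b" using regular_emb_at bd(1) .
    have "?t d = meet_at d (s d) (e b d (e \<alpha> b x))"
      unfolding thread_meet_def using bd order_trans[OF bd] emb_comp[OF bd] x by simp
    then have "\<pi> b d (?t d) = meet_at b (\<pi> b d (s d)) (e \<alpha> b x)"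
      using E.retract_meet_emb thread_closed[OF s] E2.emb_closed x by simp
    then show ?thesis unfolding thread_meet_def using bd thread_retract[OF s bd(2)] by simp
  qed
  fix b d :: 'i assume bd: "b \<le> d"
  show "\<pi> b d (?t d) = ?t b"
  proof (cases "\<alpha> \<le> b")
    case True then show ?thesis using above bd by blast
  next
    case nb: False
    show ?thesis
    proof (cases "\<alpha> \<le> d")
      case True
      have "\<pi> b d (?t d) = \<pi> b \<alpha> (\<pi> \<alpha> d (?t d))"
        using retract_comp_at[of b \<alpha> d] nb True thread_meet_closed[OF s x] by simp
      also have "\<dots> = \<pi> b \<alpha> (?t \<alpha>)" using above[of \<alpha> d] True by simp
      finally show ?thesis using nb x unfolding thread_meet_at[OF x] unfolding thread_meet_def by simp
    next
      case False
      have "meet_at \<alpha> (s \<alpha>) x \<in> B \<alpha>"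
        using cba_set.meet_closed[OF cba_at] thread_closed[OF s] x by blast
      then show ?thesis using retract_comp_at[of b d \<alpha>] bd False nb unfolding thread_meet_def by simp
    qed
  qed
qed

lemma thread_meet_le:
  assumes s: "s \<in> threads B le e" and x: "x \<in> B \<alpha>"
  shows "thread_le le (thread_meet s \<alpha> x) s"
  unfolding thread_le_def
proof
  fix b show "le b (thread_meet s \<alpha> x b) (s b)"
  proof (cases "\<alpha> \<le> b")
    case True
    interpret E: regular_emb "B \<alpha>" "le \<alpha>" "B b" "le b" "e \<alpha> b" using regular_emb_at True .
    show ?thesis using True E.t.meet_le1 thread_closed[OF s] E.emb_closed x
      unfolding thread_meet_def by simp
  next
    case False
    interpret E: regular_emb "B b" "le b" "B \<alpha>" "le \<alpha>" "e b \<alpha>" using regular_emb_at False by simp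
    have "le \<alpha> (meet_at \<alpha> (s \<alpha>) x) (s \<alpha>)" using E.t.meet_le1 thread_closed[OF s] x by blast
    then have "le b (\<pi> b \<alpha> (meet_at \<alpha> (s \<alpha>) x)) (\<pi> b \<alpha> (s \<alpha>))"
      using E.retract_mono E.t.meet_closed thread_closed[OF s] x by blast
    then show ?thesis using False thread_retract[OF s] unfolding thread_meet_def by simp
  qed
qed

lemma thread_meet_le_thread:
  assumes s: "s \<in> threads B le e" and f: "f \<in> threads B le e"
    and above: "\<And>b. \<alpha> \<le> b \<Longrightarrow> le b (meet_at b (s b) (e \<alpha> b (f \<alpha>))) (f b)"
  shows "thread_le le (thread_meet s \<alpha> (f \<alpha>)) f"
  unfolding thread_le_def
proof
  fix b show "le b (thread_meet s \<alpha> (f \<alpha>) b) (f b)"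
  proof (cases "\<alpha> \<le> b")
    case True
    then show ?thesis using above unfolding thread_meet_def by simp
  next
    case False
    interpret E: regular_emb "B b" "le b" "B \<alpha>" "le \<alpha>" "e b \<alpha>" using regular_emb_at False by simp
    have "le \<alpha> (meet_at \<alpha> (s \<alpha>) (f \<alpha>)) (f \<alpha>)" using E.t.meet_le2 thread_closed s f by blast
    then have "le b (\<pi> b \<alpha> (meet_at \<alpha> (s \<alpha>) (f \<alpha>))) (\<pi> b \<alpha> (f \<alpha>))"
      using E.retract_mono E.t.meet_closed thread_closed s f by blast
    then show ?thesis using False thread_retract[OF f] unfolding thread_meet_def by simp
  qed
qed

lemma emb_meet_eq_bot_if_incompatible:
  assumes f: "f \<in> threads B le e" and g: "g \<in> threads B le e" and ab: "\<alpha> \<le> b"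
    and incompatible: "ba_incompatible B le \<alpha> (f \<alpha>) (g \<alpha>)"
  shows "meet_at b (e \<alpha> b (f \<alpha>)) (g b) = bot_at b"
proof -
  interpret E: regular_emb "B \<alpha>" "le \<alpha>" "B b" "le b" "e \<alpha> b" using regular_emb_at ab .
  have fS: "f \<alpha> \<in> B \<alpha>" and gS: "g \<alpha> \<in> B \<alpha>" using thread_closed f g by blast+
  have "meet_at \<alpha> (g \<alpha>) (f \<alpha>) = bot_at \<alpha>"
    using incompatible E.s.meet_closed E.s.meet_le1 E.s.meet_le2 fS gS
    unfolding ba_incompatible_def bot_of_def by (metis E.s.meet_commute)
  then have "meet_at b (e \<alpha> b (g \<alpha>)) (e \<alpha> b (f \<alpha>)) = bot_at b"
    using E.emb_meet[OF gS fS] E.emb_bot by simp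
  then show ?thesis
    using E.t.meet_eq_bot_mono[OF thread_closed[OF g] E.emb_closed[OF gS] E.emb_closed[OF fS]
        thread_le_emb[OF g ab]] E.t.meet_commute by metis
qed

lemma thread_meet_neq_zero:
  assumes x: "x \<in> B \<alpha>" and nonzero: "meet_at \<alpha> (s \<alpha>) x \<noteq> bot_at \<alpha>"
  shows "thread_meet s \<alpha> x \<noteq> zero_thread B le"
proof
  assume "thread_meet s \<alpha> x = zero_thread B le"
  then have "thread_meet s \<alpha> x \<alpha> = bot_at \<alpha>" unfolding zero_thread_def bot_of_def by simp
  then show False using nonzero thread_meet_at[OF x] by simp
qed

lemma thread_meet_le_member:
  assumes A: "A \<subseteq> threads B le e"
    and disj: "\<forall>f\<in>A. \<forall>g\<in>A. f \<noteq> g \<longrightarrow> ba_incompatible B le \<alpha> (f \<alpha>) (g \<alpha>)"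
    and s: "s \<in> threads B le e" and s_le: "thread_le le s (pointwise_sup B le A)"
    and fA: "f \<in> A"
  shows "thread_le le (thread_meet s \<alpha> (f \<alpha>)) f"
proof (rule thread_meet_le_thread[OF s])
  have f: "f \<in> threads B le e" using A fA by blast
  fix b assume ab: "\<alpha> \<le> b"
  interpret E: regular_emb "B \<alpha>" "le \<alpha>" "B b" "le b" "e \<alpha> b" using regular_emb_at ab .
  show "le b (meet_at b (s b) (e \<alpha> b (f \<alpha>))) (f b)"
  proof (rule E.t.meet_le_if_disjoint_from_others)
    show "(\<lambda>f. f b) ` A \<subseteq> B b" using A thread_closed by blast
    show "le b (s b) (lub_in (le b) (B b) ((\<lambda>f. f b) ` A))"
      using s_le unfolding thread_le_def pointwise_sup_def by blast
    show "s b \<in> B b" "e \<alpha> b (f \<alpha>) \<in> B b" "f b \<in> B b"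
      using E.emb_closed thread_closed s f by blast+
    fix w assume "w \<in> (\<lambda>f. f b) ` A" "w \<noteq> f b"
    then obtain g where g: "g \<in> A" "f \<noteq> g" "w = g b" by blast
    have "ba_incompatible B le \<alpha> (f \<alpha>) (g \<alpha>)" using disj fA g by blast
    then show "meet_at b (e \<alpha> b (f \<alpha>)) w = bot_at b"
      using emb_meet_eq_bot_if_incompatible[OF f _ ab] A g by blast
  qed
qed (use A fA in blast)

lemma ex_common_extension:
  assumes A: "A \<subseteq> threads B le e"
    and disj: "\<forall>f\<in>A. \<forall>g\<in>A. f \<noteq> g \<longrightarrow> ba_incompatible B le \<alpha> (f \<alpha>) (g \<alpha>)"
    and s_poset: "s \<in> thread_poset B le e" and s_le: "thread_le le s (pointwise_sup B le A)"
  shows "\<exists>f\<in>A. \<exists>t\<in>thread_poset B le e. thread_le le t s \<and> thread_le le t f"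
proof -
  have s: "s \<in> threads B le e" "s \<noteq> zero_thread B le" using s_poset unfolding thread_poset_def by blast+
  have "(\<lambda>f. f \<alpha>) ` A \<subseteq> B \<alpha>" using A thread_closed by blast
  moreover have "le \<alpha> (s \<alpha>) (lub_in (le \<alpha>) (B \<alpha>) ((\<lambda>f. f \<alpha>) ` A))"
    using s_le unfolding thread_le_def pointwise_sup_def by blast
  ultimately obtain f where fA: "f \<in> A" and sf: "meet_at \<alpha> (s \<alpha>) (f \<alpha>) \<noteq> bot_at \<alpha>"
    using cba_set.ex_meet_neq_bot_if_le_lub_in[OF cba_at thread_closed[OF s(1)] thread_neq_bot_at[OF s]]
    by blast
  have fa: "f \<alpha> \<in> B \<alpha>" using thread_closed A fA by blast
  show ?thesis
    unfolding thread_poset_def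
    using fA thread_meet_in_threads[OF s(1) fa] thread_meet_neq_zero[of "f \<alpha>" \<alpha> s, OF fa sf]
      thread_meet_le[OF s(1) fa] thread_meet_le_member[OF A disj s(1) s_le fA] by blast
qed

end

lemma regular_open_ro_emb:
  assumes r_refl: "\<And>p. p \<in> P \<Longrightarrow> r p p"
    and r_trans: "\<And>x y z. x \<in> P \<Longrightarrow> y \<in> P \<Longrightarrow> z \<in> P \<Longrightarrow> r x y \<Longrightarrow> r y z \<Longrightarrow> r x z"
  shows "regular_open P r (ro_emb P r x)"
  unfolding regular_open_def
proof (intro conjI ballI impI)
  show "ro_emb P r x \<subseteq> P" unfolding ro_emb_def by blast
next
  fix p q assume "p \<in> ro_emb P r x" "q \<in> P" "r q p"
  then show "q \<in> ro_emb P r x" unfolding ro_emb_def using r_trans by blast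
next
  fix p assume p: "p \<in> P" and dense: "\<forall>q\<in>P. r q p \<longrightarrow> (\<exists>s\<in>ro_emb P r x. r s q)"
  show "p \<in> ro_emb P r x" unfolding ro_emb_def
  proof (intro CollectI conjI ballI impI p)
    fix q assume q: "q \<in> P" "r q p"
    then obtain s where s: "s \<in> ro_emb P r x" "r s q" using dense by blast
    then have "s \<in> P" "compatible P r s x" unfolding ro_emb_def using r_refl by blast+
    then obtain w where "w \<in> P" "r w s" "r w x" unfolding compatible_def by blast
    then show "compatible P r q x" unfolding compatible_def using r_trans s q \<open>s \<in> P\<close> by blast
  qed
qed

lemma ro_emb_mono: "(\<And>s. s \<in> P \<Longrightarrow> r s x \<Longrightarrow> r s y) \<Longrightarrow> ro_emb P r x \<subseteq> ro_emb P r y"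
  unfolding ro_emb_def compatible_def by blast

lemma mem_ro_emb_if_le:
  assumes r_refl: "\<And>p. p \<in> P \<Longrightarrow> r p p"
    and r_trans: "\<And>x y z. x \<in> P \<Longrightarrow> y \<in> P \<Longrightarrow> z \<in> P \<Longrightarrow> r x y \<Longrightarrow> r y z \<Longrightarrow> r x z"
    and p: "p \<in> P" and x: "x \<in> P" and px: "r p x"
  shows "p \<in> ro_emb P r x"
  unfolding ro_emb_def compatible_def
proof (intro CollectI conjI ballI impI p)
  fix q assume "q \<in> P" "r q p"
  then show "\<exists>s\<in>P. r s q \<and> r s x" using r_refl r_trans[OF _ p x _ px] by blast
qed

lemma ro_emb_is_lub_if_predense_below:
  assumes r_refl: "\<And>p. p \<in> P \<Longrightarrow> r p p"
    and r_trans: "\<And>x y z. x \<in> P \<Longrightarrow> y \<in> P \<Longrightarrow> z \<in> P \<Longrightarrow> r x y \<Longrightarrow> r y z \<Longrightarrow> r x z"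
    and A: "A \<subseteq> P"
    and below: "\<And>a s. a \<in> A \<Longrightarrow> s \<in> P \<Longrightarrow> r s a \<Longrightarrow> r s g"
    and predense: "\<And>s. s \<in> P \<Longrightarrow> r s g \<Longrightarrow> \<exists>a\<in>A. \<exists>t\<in>P. r t s \<and> r t a"
  shows "is_lub (\<subseteq>) (RO P r) (ro_emb P r ` A) (ro_emb P r g)"
  unfolding is_lub_def
proof (intro conjI ballI impI)
  have "regular_open P r (ro_emb P r g)"
    using r_refl r_trans by (rule regular_open_ro_emb)
  then show "ro_emb P r g \<in> RO P r" unfolding RO_def by blast
  show "U \<subseteq> ro_emb P r g" if "U \<in> ro_emb P r ` A" for U
  proof -
    obtain a where a: "a \<in> A" and U: "U = ro_emb P r a" using \<open>U \<in> ro_emb P r ` A\<close> by blast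
    have "ro_emb P r a \<subseteq> ro_emb P r g" by (rule ro_emb_mono) (rule below[OF a])
    then show ?thesis using U by simp
  qed
next
  fix U assume U: "U \<in> RO P r" "\<forall>V\<in>ro_emb P r ` A. V \<subseteq> U"
  have U_open: "\<forall>p\<in>P. (\<forall>q\<in>P. r q p \<longrightarrow> (\<exists>t\<in>U. r t q)) \<longrightarrow> p \<in> U"
    using U(1) unfolding RO_def regular_open_def by blast
  show "ro_emb P r g \<subseteq> U"
  proof
    fix p assume p: "p \<in> ro_emb P r g"
    have "\<exists>t\<in>U. r t q" if q: "q \<in> P" "r q p" for q
    proof -
      have "compatible P r q g" using p q unfolding ro_emb_def by blast
      then obtain s where s: "s \<in> P" "r s q" "r s g" unfolding compatible_def by blast
      then obtain a t where a: "a \<in> A" and t: "t \<in> P" "r t s" "r t a" using predense by blast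
      have "a \<in> P" using a A by blast
      with r_refl r_trans t(1) have "t \<in> ro_emb P r a" using t(3) by (rule mem_ro_emb_if_le)
      then have "t \<in> U" using a U(2) by blast
      moreover have "r t q" using r_trans[OF t(1) s(1) q(1) t(2) s(2)] .
      ultimately show ?thesis by blast
    qed
    moreover have "p \<in> P" using p unfolding ro_emb_def by blast
    ultimately show "p \<in> U" using U_open by blast
  qed
qed

theorem lemma3p8:
  fixes B :: "'i::wellorder \<Rightarrow> 'b set"
    and le :: "'i \<Rightarrow> 'b \<Rightarrow> 'b \<Rightarrow> bool"
    and e :: "'i \<Rightarrow> 'i \<Rightarrow> 'b \<Rightarrow> 'b"
    and A :: "('i \<Rightarrow> 'b) set"
  assumes "complete_iteration_system B le e"
    and "antichain (thread_poset B le e) (thread_le le) A"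
    and "\<exists>a. inj_on (\<lambda>f. f a) A \<and>
           (\<forall>f\<in>A. \<forall>g\<in>A. f \<noteq> g \<longrightarrow> ba_incompatible B le a (f a) (g a))"
  shows "is_lub (\<subseteq>) (RO (thread_poset B le e) (thread_le le))
           (ro_emb (thread_poset B le e) (thread_le le) ` A)
           (ro_emb (thread_poset B le e) (thread_le le) (pointwise_sup B le A))"
proof -
  interpret iteration_system B le e by (rule iteration_system.intro) fact
  let ?P = "thread_poset B le e"
  obtain \<alpha> where disj: "\<forall>f\<in>A. \<forall>g\<in>A. f \<noteq> g \<longrightarrow> ba_incompatible B le \<alpha> (f \<alpha>) (g \<alpha>)"
    using assms(3) by blast
  have P: "?P \<subseteq> threads B le e" unfolding thread_poset_def by blast
  have A: "A \<subseteq> ?P" using assms(2) unfolding antichain_def by blast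
  then have A_threads: "A \<subseteq> threads B le e" using P by blast
  show ?thesis
  proof (rule ro_emb_is_lub_if_predense_below[OF _ _ A])
    show "thread_le le p p" if "p \<in> ?P" for p
      using thread_le_refl that P by blast
    show "thread_le le x z" if "x \<in> ?P" "y \<in> ?P" "z \<in> ?P" "thread_le le x y" "thread_le le y z" for x y z
      using thread_le_trans[OF _ _ thread_closed[of z] that(4,5)] that(1-3) P by blast
    show "thread_le le s (pointwise_sup B le A)" if "f \<in> A" "s \<in> ?P" "thread_le le s f" for f s
      using le_pointwise_sup[OF A_threads that(1) _ that(3)] that(2) P by blast
    show "\<exists>f\<in>A. \<exists>t\<in>?P. thread_le le t s \<and> thread_le le t f"
      if "s \<in> ?P" "thread_le le s (pointwise_sup B le A)" for s
      using ex_common_extension[OF A_threads disj that] .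
  qed
qed

end
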